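(* Let $K$ be a simplex in $\mathbb{R}^d$, $d\ge2$, belonging to a simplicial mesh with shape-regularity parameter $\vartheta_{\mathcal{T}}$, and let $p\ge0$. Then for every $\bm v\in\bm{RTN}_p(K)$, $$h_K\|\nabla\cdot\bm v\|_K\le\sqrt{2d}\,\vartheta_{\mathcal{T}}\,C_{p+1,d}\,\|\bm v\|_K.$$
   Context: $h_K$ is the diameter of $K$; $\vartheta_{\mathcal{T}}:=\max_{K}h_K/\rho_K$ over the mesh, with $\rho_K$ the diameter of the largest ball inscribed in $K$. $\bm{RTN}_p(K):=\mathbb{P}_p(K;\mathbb{R}^d)+\mathbb{P}_p(K)\bm x$. $C_{q,d}$ is the best constant such that $\|\partial_{x_i}v\|_{L^2(K^d)}\le C_{q,d}\|v\|_{L^2(K^d)}$ for all polynomials $v$ of total degree at most $q$ on the unit simplex $K^d:=\{x\in\mathbb{R}^d:x_i\ge0,\ \sum_ix_i\le1\}$ and all $i\in\{1,\dots,d\}$. Norms are $L^2(K)$ norms. *)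

theory Defs
  imports "HOL-Analysis.Analysis"
begin

definition multi_indices :: "nat \<Rightarrow> ('n::finite \<Rightarrow> nat) set" where
  "multi_indices q = {\<alpha>. (\<Sum>i\<in>UNIV. \<alpha> i) \<le> q}"

definition poly_fun :: "nat \<Rightarrow> (real^'n::finite \<Rightarrow> real) \<Rightarrow> bool" where
  "poly_fun q f \<longleftrightarrow> (\<exists>c :: ('n \<Rightarrow> nat) \<Rightarrow> real.
     f = (\<lambda>x. \<Sum>\<alpha>\<in>multi_indices q. c \<alpha> * (\<Prod>i\<in>UNIV. (x $ i) ^ (\<alpha> i))))"

definition vpoly_fun :: "nat \<Rightarrow> (real^'n::finite \<Rightarrow> real^'n) \<Rightarrow> bool" where
  "vpoly_fun q v \<longleftrightarrow> (\<forall>i. poly_fun q (\<lambda>x. v x $ i))"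

definition RTN :: "nat \<Rightarrow> (real^'n::finite \<Rightarrow> real^'n) set" where
  "RTN p = {v. \<exists>w r. vpoly_fun p w \<and> poly_fun p r \<and> v = (\<lambda>x. w x + r x *\<^sub>R x)}"

definition partial :: "'n::finite \<Rightarrow> (real^'n \<Rightarrow> real) \<Rightarrow> real^'n \<Rightarrow> real" where
  "partial i f x = deriv (\<lambda>t. f (x + t *\<^sub>R axis i 1)) 0"

definition divergence :: "(real^'n::finite \<Rightarrow> real^'n) \<Rightarrow> real^'n \<Rightarrow> real" where
  "divergence v x = (\<Sum>i\<in>UNIV. partial i (\<lambda>y. v y $ i) x)"

definition L2norm :: "(real^'n::finite) set \<Rightarrow> (real^'n \<Rightarrow> real) \<Rightarrow> real" where
  "L2norm K f = sqrt (integral K (\<lambda>x. (f x)\<^sup>2))"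

definition L2norm_vec :: "(real^'n::finite) set \<Rightarrow> (real^'n \<Rightarrow> real^'n) \<Rightarrow> real" where
  "L2norm_vec K v = sqrt (integral K (\<lambda>x. (norm (v x))\<^sup>2))"

definition unit_simplex :: "(real^'n::finite) set" where
  "unit_simplex = {x. (\<forall>i. 0 \<le> x $ i) \<and> (\<Sum>i\<in>UNIV. x $ i) \<le> 1}"

definition Cqd :: "'n::finite itself \<Rightarrow> nat \<Rightarrow> real" where
  "Cqd _ q = Inf {C. \<forall>(v :: real^'n \<Rightarrow> real) i. poly_fun q v \<longrightarrow>
      L2norm unit_simplex (partial i v) \<le> C * L2norm unit_simplex v}"

definition inball_diam :: "(real^'n::finite) set \<Rightarrow> real" where
  "inball_diam K = 2 * Sup {r. \<exists>c. ball c r \<subseteq> K}"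

definition simplicial_mesh :: "(real^'n::finite) set set \<Rightarrow> bool" where
  "simplicial_mesh T \<longleftrightarrow> finite T \<and> (\<forall>K\<in>T. (int CARD('n)) simplex K) \<and>
     (\<forall>K\<in>T. \<forall>K'\<in>T. K \<noteq> K' \<longrightarrow> interior K \<inter> interior K' = {})"

definition shape_reg :: "(real^'n::finite) set set \<Rightarrow> real" where
  "shape_reg T = Max ((\<lambda>K. diameter K / inball_diam K) ` T)"

end

theory Submission
  imports Defs
begin

definition monomial :: "('n::finite \<Rightarrow> nat) \<Rightarrow> real^'n \<Rightarrow> real" where
  "monomial \<alpha> x = (\<Prod>i\<in>UNIV. x $ i ^ \<alpha> i)"

lemma finite_multi_indices: "finite (multi_indices q :: ('n::finite \<Rightarrow> nat) set)"
proof (rule finite_subset)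
  show "multi_indices q \<subseteq> PiE UNIV (\<lambda>_::'n. {..q})"
  proof
    fix \<alpha> :: "'n \<Rightarrow> nat"
    assume "\<alpha> \<in> multi_indices q"
    then have "\<alpha> i \<le> q" for i
      using member_le_sum[of i UNIV \<alpha>] by (simp add: multi_indices_def)
    then show "\<alpha> \<in> PiE UNIV (\<lambda>_. {..q})" by (auto simp: PiE_def extensional_def)
  qed
qed (simp add: finite_PiE)

lemma poly_fun_iff_monomials:
  "poly_fun q f \<longleftrightarrow> (\<exists>c. f = (\<lambda>x. \<Sum>\<alpha>\<in>multi_indices q. c \<alpha> * monomial \<alpha> x))"
  by (simp add: poly_fun_def monomial_def)

lemma poly_fun_add:
  assumes "poly_fun q f" "poly_fun q g"
  shows "poly_fun q (\<lambda>x. f x + g x)"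
proof -
  obtain c d where "f = (\<lambda>x. \<Sum>\<alpha>\<in>multi_indices q. c \<alpha> * monomial \<alpha> x)"
      "g = (\<lambda>x. \<Sum>\<alpha>\<in>multi_indices q. d \<alpha> * monomial \<alpha> x)"
    using assms unfolding poly_fun_iff_monomials by blast
  then show ?thesis unfolding poly_fun_iff_monomials
    by (intro exI[of _ "\<lambda>\<alpha>. c \<alpha> + d \<alpha>"]) (simp add: sum.distrib distrib_right)
qed

lemma poly_fun_cmult:
  assumes "poly_fun q f"
  shows "poly_fun q (\<lambda>x. a * f x)"
proof -
  obtain c where "f = (\<lambda>x. \<Sum>\<alpha>\<in>multi_indices q. c \<alpha> * monomial \<alpha> x)"
    using assms unfolding poly_fun_iff_monomials by blast
  then show ?thesis unfolding poly_fun_iff_monomials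
    by (intro exI[of _ "\<lambda>\<alpha>. a * c \<alpha>"]) (simp add: sum_distrib_left mult.assoc)
qed

lemma poly_fun_sum:
  assumes "finite S" "\<And>s. s \<in> S \<Longrightarrow> poly_fun q (f s)"
  shows "poly_fun q (\<lambda>x. \<Sum>s\<in>S. f s x)"
  using assms
proof (induction S rule: finite_induct)
  case empty
  show ?case unfolding poly_fun_iff_monomials by (intro exI[of _ "\<lambda>_. 0"]) simp
qed (simp add: poly_fun_add)

lemma poly_fun_monomial:
  assumes "\<gamma> \<in> multi_indices q"
  shows "poly_fun q (\<lambda>x. a * monomial \<gamma> x)"
  unfolding poly_fun_iff_monomials
proof (intro exI[of _ "\<lambda>\<alpha>. if \<alpha> = \<gamma> then a else 0"] ext)
  fix x
  have "(\<Sum>\<alpha>\<in>multi_indices q. (if \<alpha> = \<gamma> then a else 0) * monomial \<alpha> x)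
      = (\<Sum>\<alpha>\<in>multi_indices q. if \<alpha> = \<gamma> then a * monomial \<alpha> x else 0)"
    by (rule sum.cong) auto
  then show "a * monomial \<gamma> x = (\<Sum>\<alpha>\<in>multi_indices q. (if \<alpha> = \<gamma> then a else 0) * monomial \<alpha> x)"
    using assms by (simp add: finite_multi_indices)
qed

lemma poly_fun_mono:
  assumes "poly_fun a f" "a \<le> b"
  shows "poly_fun b f"
proof -
  obtain c where f: "f = (\<lambda>x. \<Sum>\<alpha>\<in>multi_indices a. c \<alpha> * monomial \<alpha> x)"
    using assms unfolding poly_fun_iff_monomials by blast
  have "multi_indices a \<subseteq> multi_indices b"
    using assms(2) by (auto simp: multi_indices_def)
  then show ?thesis unfolding f
    by (intro poly_fun_sum finite_multi_indices poly_fun_monomial) auto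
qed

lemma monomial_mult: "monomial \<alpha> x * monomial \<beta> x = monomial (\<lambda>i. \<alpha> i + \<beta> i) x"
  by (simp add: monomial_def power_add prod.distrib)

lemma poly_fun_mult:
  assumes "poly_fun a f" "poly_fun b g"
  shows "poly_fun (a + b) (\<lambda>x. f x * g x)"
proof -
  obtain c d where f: "f = (\<lambda>x. \<Sum>\<alpha>\<in>multi_indices a. c \<alpha> * monomial \<alpha> x)"
      and g: "g = (\<lambda>x. \<Sum>\<beta>\<in>multi_indices b. d \<beta> * monomial \<beta> x)"
    using assms unfolding poly_fun_iff_monomials by blast
  have fg: "(\<lambda>x. f x * g x) = (\<lambda>x. \<Sum>\<alpha>\<in>multi_indices a. \<Sum>\<beta>\<in>multi_indices b.
       (c \<alpha> * d \<beta>) * monomial (\<lambda>i. \<alpha> i + \<beta> i) x)"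
    unfolding f g by (simp add: sum_product monomial_mult[symmetric] algebra_simps)
  have "(\<lambda>i. \<alpha> i + \<beta> i) \<in> multi_indices (a + b)"
    if "\<alpha> \<in> multi_indices a" "\<beta> \<in> multi_indices b" for \<alpha> \<beta>
    using that by (simp add: multi_indices_def sum.distrib)
  then show ?thesis unfolding fg
    by (intro poly_fun_sum finite_multi_indices poly_fun_monomial) auto
qed

lemma poly_fun_const: "poly_fun q (\<lambda>x::real^'n::finite. a)"
  using poly_fun_monomial[of "\<lambda>_. 0" q a] by (simp add: multi_indices_def monomial_def)

lemma poly_fun_coord: "poly_fun 1 (\<lambda>x::real^'n::finite. x $ j)"
proof -
  have m: "(\<lambda>i::'n. if i = j then 1 else 0) \<in> multi_indices 1"
    by (simp add: multi_indices_def)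
  have "monomial (\<lambda>i. if i = j then 1 else 0) x = x $ j" for x :: "real^'n"
    unfolding monomial_def by (simp add: if_distrib prod.delta cong: if_cong)
  with poly_fun_monomial[OF m, of 1] show ?thesis by simp
qed

lemma poly_fun_power:
  assumes "poly_fun a f"
  shows "poly_fun (k * a) (\<lambda>x. f x ^ k)"
proof (induction k)
  case 0
  show ?case using poly_fun_const[of 0 1] by simp
next
  case (Suc k)
  show ?case using poly_fun_mult[OF assms Suc] by (simp add: add.commute)
qed

lemma poly_fun_prod:
  assumes "finite S" "\<And>s. s \<in> S \<Longrightarrow> poly_fun (a s) (f s)"
  shows "poly_fun (\<Sum>s\<in>S. a s) (\<lambda>x. \<Prod>s\<in>S. f s x)"
  using assms
proof (induction S rule: finite_induct)
  case empty
  show ?case using poly_fun_const[of 0 1] by simp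
qed (simp add: poly_fun_mult)

lemma poly_fun_compose:
  fixes f :: "real^'n::finite \<Rightarrow> real" and G :: "real^'m::finite \<Rightarrow> real^'n"
  assumes "poly_fun q f" "\<And>i. poly_fun 1 (\<lambda>x. G x $ i)"
  shows "poly_fun q (\<lambda>x. f (G x))"
proof -
  obtain c where f: "f = (\<lambda>x. \<Sum>\<alpha>\<in>multi_indices q. c \<alpha> * monomial \<alpha> x)"
    using assms unfolding poly_fun_iff_monomials by blast
  have "poly_fun q (\<lambda>x. monomial \<alpha> (G x))" if "\<alpha> \<in> multi_indices q" for \<alpha>
  proof (rule poly_fun_mono)
    show "poly_fun (\<Sum>i\<in>UNIV. \<alpha> i * 1) (\<lambda>x. monomial \<alpha> (G x))"
      unfolding monomial_def by (intro poly_fun_prod poly_fun_power assms) auto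
  qed (use that in \<open>simp add: multi_indices_def\<close>)
  then show ?thesis unfolding f
    by (intro poly_fun_sum finite_multi_indices poly_fun_cmult)
qed

lemma linear_component_expansion:
  fixes M :: "real^'n::finite \<Rightarrow> real^'m::finite"
  assumes "linear M"
  shows "M y $ k = (\<Sum>i\<in>UNIV. M (axis i 1) $ k * y $ i)"
proof -
  have "M y = M (\<Sum>i\<in>UNIV. y $ i *\<^sub>R axis i 1)"
    using basis_expansion[of y] by (simp add: scalar_mult_eq_scaleR)
  also have "\<dots> = (\<Sum>i\<in>UNIV. y $ i *\<^sub>R M (axis i 1))"
    by (simp add: linear_sum[OF assms] linear_scale[OF assms])
  finally show ?thesis by (simp add: sum_component mult.commute)
qed

lemma poly_fun_linear_image:
  assumes "linear M" "\<And>i. poly_fun q (\<lambda>x. w x $ i)"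
  shows "poly_fun q (\<lambda>x. M (w x) $ k)"
proof -
  have "poly_fun q (\<lambda>x. \<Sum>i\<in>UNIV. M (axis i 1) $ k * w x $ i)"
    by (intro poly_fun_sum poly_fun_cmult assms(2)) simp
  moreover have "M (w x) $ k = (\<Sum>i\<in>UNIV. M (axis i 1) $ k * w x $ i)" for x
    by (rule linear_component_expansion[OF assms(1)])
  ultimately show ?thesis by simp
qed

lemma poly_fun_comp_affine:
  fixes L :: "real^'m::finite \<Rightarrow> real^'n::finite"
  assumes "linear L" "poly_fun q f"
  shows "poly_fun q (\<lambda>z. f (a + L z))"
proof (rule poly_fun_compose[OF assms(2)])
  fix j
  have "poly_fun 1 (\<lambda>z. L z $ j)"
    using poly_fun_linear_image[of L 1 "\<lambda>x. x", OF assms(1) poly_fun_coord] by simp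
  then show "poly_fun 1 (\<lambda>z. (a + L z) $ j)"
    using poly_fun_add[OF poly_fun_const] by simp
qed

lemma real_polynomial_function_monomial: "real_polynomial_function (monomial \<alpha>)"
proof -
  have "real_polynomial_function (\<lambda>x::real^'n. x $ i)" for i
    by (simp add: real_polynomial_function_eq polynomial_function_bounded_linear bounded_linear_vec_nth)
  then show ?thesis
    unfolding monomial_def by (intro real_polynomial_function_prod real_polynomial_function_power) auto
qed

lemma poly_fun_imp_real_polynomial_function:
  assumes "poly_fun q f"
  shows "real_polynomial_function f"
proof -
  obtain c where f: "f = (\<lambda>x. \<Sum>\<alpha>\<in>multi_indices q. c \<alpha> * monomial \<alpha> x)"
    using assms unfolding poly_fun_iff_monomials by blast
  show ?thesis
    unfolding f by (intro real_polynomial_function_sum finite_multi_indices ballI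
        real_polynomial_function.intros(2,4) real_polynomial_function_monomial)
qed

lemma RTN_component_poly_fun:
  assumes "v \<in> RTN p"
  shows "poly_fun (p + 1) (\<lambda>x. v x $ i)"
proof -
  obtain w r where w: "vpoly_fun p w" and r: "poly_fun p r" and v: "v = (\<lambda>x. w x + r x *\<^sub>R x)"
    using assms unfolding RTN_def by blast
  have "poly_fun (p + 1) (\<lambda>x. w x $ i)"
    using w unfolding vpoly_fun_def by (auto intro: poly_fun_mono)
  moreover have "poly_fun (p + 1) (\<lambda>x. r x * x $ i)"
    by (rule poly_fun_mult[OF r poly_fun_coord])
  ultimately show ?thesis
    unfolding v by (simp only: vector_add_component vector_scaleR_component real_scaleR_def poly_fun_add)
qed

lemma partial_eq_derivative:
  assumes "(f has_derivative D) (at x)"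
  shows "partial i f x = D (axis i 1)"
proof -
  have "((\<lambda>t::real. x + t *\<^sub>R axis i 1) has_derivative (\<lambda>t. t *\<^sub>R axis i 1)) (at 0)"
    by (auto intro!: derivative_eq_intros)
  from has_derivative_compose[OF this] assms
  have "((\<lambda>t. f (x + t *\<^sub>R axis i 1)) has_derivative (\<lambda>t. D (t *\<^sub>R axis i 1))) (at 0)"
    by simp
  moreover have "(\<lambda>t. D (t *\<^sub>R axis i 1)) = (*) (D (axis i 1))"
    using linear_scale[OF has_derivative_linear[OF assms]] by (auto simp: fun_eq_iff)
  ultimately have "((\<lambda>t. f (x + t *\<^sub>R axis i 1)) has_field_derivative D (axis i 1)) (at 0)"
    by (simp add: has_field_derivative_def)
  then show ?thesis unfolding partial_def by (rule DERIV_imp_deriv)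
qed

lemma partial_const: "partial i (\<lambda>y. c) x = 0"
  using partial_eq_derivative[of "\<lambda>y. c" "\<lambda>_. 0" x i] by simp

lemma partial_add:
  assumes "f differentiable (at x)" "g differentiable (at x)"
  shows "partial i (\<lambda>y. f y + g y) x = partial i f x + partial i g x"
proof -
  obtain Df Dg where f: "(f has_derivative Df) (at x)" and g: "(g has_derivative Dg) (at x)"
    using assms unfolding differentiable_def by blast
  show ?thesis
    using has_derivative_add[OF f g] by (simp add: partial_eq_derivative[OF f] partial_eq_derivative[OF g] partial_eq_derivative)
qed

lemma partial_mult:
  assumes "f differentiable (at x)" "g differentiable (at x)"
  shows "partial i (\<lambda>y. f y * g y) x = partial i f x * g x + f x * partial i g x"
proof -
  obtain Df Dg where f: "(f has_derivative Df) (at x)" and g: "(g has_derivative Dg) (at x)"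
    using assms unfolding differentiable_def by blast
  show ?thesis
    using has_derivative_mult[OF f g] by (simp add: partial_eq_derivative[OF f] partial_eq_derivative[OF g] partial_eq_derivative)
qed

lemma partial_cmult:
  assumes "f differentiable (at x)"
  shows "partial i (\<lambda>y. c * f y) x = c * partial i f x"
  using partial_mult[OF differentiable_const assms] by (simp add: partial_const)

lemma real_polynomial_function_partial:
  assumes "real_polynomial_function f"
  shows "real_polynomial_function (partial i f)"
  using assms
proof (induction f rule: real_polynomial_function.induct)
  case (linear f)
  then have "partial i f = (\<lambda>_. f (axis i 1))"
    by (simp add: fun_eq_iff partial_eq_derivative bounded_linear_imp_has_derivative)
  then show ?case by (simp add: real_polynomial_function.intros(2))
next
  case (const c)
  then show ?case by (simp add: partial_const real_polynomial_function.intros(2))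
next
  case (add f g)
  then have "partial i (\<lambda>x. f x + g x) = (\<lambda>x. partial i f x + partial i g x)"
    by (simp add: fun_eq_iff partial_add differentiable_at_real_polynomial_function)
  then show ?case using add.IH by (simp add: real_polynomial_function.intros(3))
next
  case (mult f g)
  then have "partial i (\<lambda>x. f x * g x) = (\<lambda>x. partial i f x * g x + f x * partial i g x)"
    by (simp add: fun_eq_iff partial_mult differentiable_at_real_polynomial_function)
  then show ?case using mult by (simp add: real_polynomial_function.intros(3,4))
qed

lemma continuous_on_real_polynomial_function:
  "real_polynomial_function f \<Longrightarrow> continuous_on S f"
  by (simp add: continuous_on_polymonial_function real_polynomial_function_eq)

lemma partial_eq_0_if_locally_0:
  assumes "r > 0" "\<And>y. y \<in> ball x r \<Longrightarrow> f y = 0"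
  shows "partial i f x = 0"
proof -
  have "((\<lambda>t. f (x + t *\<^sub>R axis i 1)) has_field_derivative 0) (at 0)"
  proof (rule has_field_derivative_transform_within_open[where S="ball 0 r"])
    fix t :: real
    assume "t \<in> ball 0 r"
    then have "x + t *\<^sub>R axis i 1 \<in> ball x r" by (simp add: dist_norm)
    then show "0 = f (x + t *\<^sub>R axis i 1)" using assms by simp
  qed (use assms in auto)
  then show ?thesis unfolding partial_def by (rule DERIV_imp_deriv)
qed

lemma divergence_eq_trace:
  assumes "(v has_derivative D) (at x)"
  shows "divergence v x = trace (matrix D)"
proof -
  have "partial i (\<lambda>y. v y $ i) x = D (axis i 1) $ i" for i
    by (rule partial_eq_derivative) (rule bounded_linear.has_derivative[OF bounded_linear_vec_nth assms])
  then show ?thesis by (simp add: divergence_def trace_def matrix_def)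
qed

text \<open>The divergence is invariant under the (unscaled) contravariant Piola transform
  \<open>v \<mapsto> L\<^sup>-\<^sup>1 \<circ> v \<circ> G\<close> along an affine map \<open>G z = a + L z\<close>: its derivative is
  \<open>L\<^sup>-\<^sup>1 D L\<close>, which has the same trace as \<open>D\<close>.\<close>
lemma divergence_affine_pullback:
  fixes v :: "real^'n::finite \<Rightarrow> real^'n" and L Li :: "real^'n \<Rightarrow> real^'n"
  assumes "linear L" "linear Li" "\<And>y. L (Li y) = y" "v differentiable (at (a + L x))"
  shows "divergence (\<lambda>z. Li (v (a + L z))) x = divergence v (a + L x)"
proof -
  obtain D where D: "(v has_derivative D) (at (a + L x))"
    using assms(4) unfolding differentiable_def by blast
  have "((\<lambda>z. a + L z) has_derivative L) (at x)"
    using has_derivative_add[OF has_derivative_const linear_imp_has_derivative[OF assms(1)]] by simp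
  from has_derivative_compose[OF has_derivative_compose[OF this D] linear_imp_has_derivative[OF assms(2)]]
  have "((\<lambda>z. Li (v (a + L z))) has_derivative Li \<circ> D \<circ> L) (at x)"
    by (simp add: comp_def)
  then have "divergence (\<lambda>z. Li (v (a + L z))) x = trace (matrix (Li \<circ> D \<circ> L))"
    by (rule divergence_eq_trace)
  also have "\<dots> = trace ((matrix Li ** matrix D) ** matrix L)"
    using assms(1,2) has_derivative_linear[OF D] by (simp only: matrix_compose linear_compose)
  also have "\<dots> = trace ((matrix L ** matrix Li) ** matrix D)"
    by (simp only: trace_mul_sym[of _ "matrix L"] matrix_mul_assoc)
  also have "matrix L ** matrix Li = matrix (L \<circ> Li)"
    using assms(1,2) by (simp only: matrix_compose)
  also have "L \<circ> Li = id"
    using assms(3) by (simp add: fun_eq_iff)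
  finally show ?thesis
    by (simp only: matrix_id_mat_1 matrix_mul_lid divergence_eq_trace[OF D])
qed

lemma quadratic_nonneg_imp_discriminant_le:
  fixes a b c :: real
  assumes "\<And>t. 0 \<le> a + 2 * b * t + c * t\<^sup>2" "0 \<le> c"
  shows "b\<^sup>2 \<le> a * c"
proof (cases "c = 0")
  case True
  have "b = 0"
  proof (rule ccontr)
    assume "b \<noteq> 0"
    define t where "t = - (\<bar>a\<bar> + 1) / (2 * b)"
    have "2 * b * t = - (\<bar>a\<bar> + 1)" using \<open>b \<noteq> 0\<close> by (simp add: t_def)
    with assms(1)[of t] True show False by simp
  qed
  with True show ?thesis by simp
next
  case False
  with assms(2) have "0 < c" by simp
  have "0 \<le> a + 2 * b * (- b / c) + c * (- b / c)\<^sup>2" by (rule assms(1))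
  also have "\<dots> = (a * c - b\<^sup>2) / c" using \<open>0 < c\<close> by (simp add: field_simps power2_eq_square)
  finally show ?thesis using \<open>0 < c\<close> by (simp add: zero_le_divide_iff)
qed

lemma integrable_continuous_compact:
  fixes f :: "'a::euclidean_space \<Rightarrow> 'b::euclidean_space"
  assumes "compact S" "continuous_on S f"
  shows "f integrable_on S"
  using borel_integrable_compact[OF assms] set_borel_integral_eq_integral(1)
  unfolding set_integrable_def by blast

lemma integral_square_nonneg:
  fixes f :: "'a::euclidean_space \<Rightarrow> real"
  shows "0 \<le> integral S (\<lambda>x. (f x)\<^sup>2)"
proof (cases "(\<lambda>x. (f x)\<^sup>2) integrable_on S")
  case True
  then show ?thesis by (rule Henstock_Kurzweil_Integration.integral_nonneg) simp
qed (simp add: not_integrable_integral)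

lemma L2norm_nonneg: "0 \<le> L2norm S f"
  by (simp add: L2norm_def integral_square_nonneg)

lemma L2norm_square: "(L2norm S f)\<^sup>2 = integral S (\<lambda>x. (f x)\<^sup>2)"
  by (simp add: L2norm_def integral_square_nonneg)

lemma L2norm_vec_eq_L2norm_norm: "L2norm_vec S v = L2norm S (\<lambda>x. norm (v x))"
  by (simp add: L2norm_vec_def L2norm_def)

definition L2inner :: "(real^'n::finite) set \<Rightarrow> (real^'n \<Rightarrow> real) \<Rightarrow> (real^'n \<Rightarrow> real) \<Rightarrow> real" where
  "L2inner S f g = integral S (\<lambda>x. f x * g x)"

lemma L2inner_self: "L2inner S f f = (L2norm S f)\<^sup>2"
  unfolding L2inner_def L2norm_square by (simp add: power2_eq_square)

lemma L2inner_commute: "L2inner S f g = L2inner S g f"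
  by (simp add: L2inner_def mult.commute)

lemma L2inner_cmult_left: "L2inner S (\<lambda>x. c * f x) g = c * L2inner S f g"
  by (simp add: L2inner_def mult.assoc)

locale compact_L2 =
  fixes S :: "(real^'n::finite) set"
  assumes compact_S: "compact S"
begin

lemma integrable_product:
  fixes f g :: "real^'n \<Rightarrow> real"
  assumes "continuous_on S f" "continuous_on S g"
  shows "(\<lambda>x. f x * g x) integrable_on S"
  by (rule integrable_continuous_compact[OF compact_S]) (intro continuous_intros assms)

lemma L2inner_add_left:
  assumes "continuous_on S f" "continuous_on S g" "continuous_on S h"
  shows "L2inner S (\<lambda>x. f x + g x) h = L2inner S f h + L2inner S g h"
  unfolding L2inner_def distrib_right by (intro integral_add integrable_product assms)

lemma L2inner_sum_left:
  assumes "finite J" "\<And>j. j \<in> J \<Longrightarrow> continuous_on S (f j)" "continuous_on S h"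
  shows "L2inner S (\<lambda>x. \<Sum>j\<in>J. f j x) h = (\<Sum>j\<in>J. L2inner S (f j) h)"
  using assms
proof (induction J rule: finite_induct)
  case empty
  show ?case by (simp add: L2inner_def)
next
  case (insert j J)
  then show ?case by (simp add: L2inner_add_left continuous_on_sum)
qed

lemma L2norm_add_square:
  assumes "continuous_on S f" "continuous_on S g"
  shows "(L2norm S (\<lambda>x. f x + t * g x))\<^sup>2
       = (L2norm S f)\<^sup>2 + 2 * t * L2inner S f g + t\<^sup>2 * (L2norm S g)\<^sup>2"
proof -
  have integrable: "(\<lambda>x. (f x)\<^sup>2) integrable_on S" "(\<lambda>x. f x * g x) integrable_on S"
    "(\<lambda>x. (g x)\<^sup>2) integrable_on S"
    by (rule integrable_continuous_compact[OF compact_S], intro continuous_intros assms)+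
  have "(\<lambda>x. (f x + t * g x)\<^sup>2) = (\<lambda>x. (f x)\<^sup>2 + (2 * t) * (f x * g x) + t\<^sup>2 * (g x)\<^sup>2)"
    by (simp add: fun_eq_iff power2_eq_square algebra_simps)
  then show ?thesis
    by (simp add: L2norm_square L2inner_def integral_add integrable_add integrable_on_mult_right integrable)
qed

lemma L2inner_Cauchy_Schwarz:
  assumes "continuous_on S f" "continuous_on S g"
  shows "\<bar>L2inner S f g\<bar> \<le> L2norm S f * L2norm S g"
proof -
  have "(L2inner S f g)\<^sup>2 \<le> (L2norm S f)\<^sup>2 * (L2norm S g)\<^sup>2"
  proof (rule quadratic_nonneg_imp_discriminant_le)
    fix t
    show "0 \<le> (L2norm S f)\<^sup>2 + 2 * L2inner S f g * t + (L2norm S g)\<^sup>2 * t\<^sup>2"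
      using L2norm_add_square[OF assms, of t] zero_le_power2[of "L2norm S (\<lambda>x. f x + t * g x)"]
      by (simp add: algebra_simps)
  qed simp
  then have "\<bar>L2inner S f g\<bar>\<^sup>2 \<le> (L2norm S f * L2norm S g)\<^sup>2"
    by (simp add: power_mult_distrib)
  then show ?thesis
    by (rule power2_le_imp_le) (simp add: L2norm_nonneg)
qed

lemma L2norm_add_le:
  assumes "continuous_on S f" "continuous_on S g"
  shows "L2norm S (\<lambda>x. f x + t * g x) \<le> L2norm S f + \<bar>t\<bar> * L2norm S g"
proof (rule power2_le_imp_le)
  have "2 * t * L2inner S f g \<le> 2 * (\<bar>t\<bar> * (L2norm S f * L2norm S g))"
    using abs_ge_self[of "t * L2inner S f g"] mult_left_mono[OF L2inner_Cauchy_Schwarz[OF assms], of "\<bar>t\<bar>"]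
    by (simp add: abs_mult)
  moreover have "(L2norm S f + \<bar>t\<bar> * L2norm S g)\<^sup>2
      = (L2norm S f)\<^sup>2 + 2 * (\<bar>t\<bar> * (L2norm S f * L2norm S g)) + t\<^sup>2 * (L2norm S g)\<^sup>2"
    by (simp add: power2_sum power_mult_distrib algebra_simps)
  ultimately show "(L2norm S (\<lambda>x. f x + t * g x))\<^sup>2 \<le> (L2norm S f + \<bar>t\<bar> * L2norm S g)\<^sup>2"
    using L2norm_add_square[OF assms, of t] by linarith
qed (simp add: L2norm_nonneg)

lemma L2norm_add_orthogonal:
  assumes "continuous_on S f" "continuous_on S g" "L2inner S f g = 0"
  shows "L2norm S (\<lambda>x. f x + t * g x) = sqrt ((L2norm S f)\<^sup>2 + (\<bar>t\<bar> * L2norm S g)\<^sup>2)"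
  using L2norm_add_square[OF assms(1,2), of t] assms(3)
  by (simp add: L2norm_nonneg power_mult_distrib real_sqrt_unique[symmetric])

text \<open>Up to the junk value of division by zero, this is the Gram--Schmidt step.\<close>
lemma L2inner_orthogonalize:
  assumes "continuous_on S f" "continuous_on S e"
  shows "L2inner S (\<lambda>x. f x - L2inner S f e / L2inner S e e * e x) e = 0"
proof (cases "L2inner S e e = 0")
  case True
  then have "L2inner S f e = 0"
    using L2inner_Cauchy_Schwarz[OF assms] by (simp add: L2inner_self)
  with True show ?thesis by simp
next
  case False
  define c where "c = L2inner S f e / L2inner S e e"
  have "L2inner S (\<lambda>x. f x + (- c) * e x) e = L2inner S f e + (- c) * L2inner S e e"
    using assms by (simp only: L2inner_add_left L2inner_cmult_left continuous_intros)
  with False show ?thesis by (simp add: c_def)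
qed

lemma L2norm_one_pos:
  assumes "interior S \<noteq> {}"
  shows "0 < L2norm S (\<lambda>_. 1)"
proof -
  obtain a b where ab: "box a b \<subseteq> interior S" "box a b \<noteq> {}"
    using open_contains_box[OF open_interior] assms by (metis ex_in_conv)
  then have "cbox a b \<subseteq> S"
    using closure_box[OF ab(2)] closure_mono[OF ab(1)] compact_S compact_imp_closed
      closure_minimal interior_subset by (metis order_trans)
  have "0 < Henstock_Kurzweil_Integration.content (cbox a b)"
    using ab(2) by (simp add: box_ne_empty content_pos_lt)
  also have "\<dots> = integral (cbox a b) (\<lambda>_. 1::real)" by simp
  also have "\<dots> \<le> integral S (\<lambda>_. 1::real)"
    by (rule integral_subset_le[OF \<open>cbox a b \<subseteq> S\<close>])
       (auto intro: integrable_continuous_compact compact_S)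
  finally show ?thesis by (simp add: L2norm_def)
qed

end

locale regular_compact_L2 = compact_L2 +
  assumes closure_interior: "closure (interior S) = S"
begin

lemma L2norm_eq_0_imp_vanishes_on_interior:
  assumes "continuous_on S e" "L2norm S e = 0" "x \<in> interior S"
  shows "e x = 0"
proof -
  obtain a b where ab: "box a b \<subseteq> interior S" "x \<in> box a b"
    using open_contains_box[OF open_interior assms(3)] by metis
  then have ne: "box a b \<noteq> {}" by auto
  have cb: "cbox a b \<subseteq> S"
    using closure_mono[OF ab(1)] closure_box[OF ne] closure_interior by simp
  have ce: "continuous_on (cbox a b) (\<lambda>y. (e y)\<^sup>2)"
    by (intro continuous_intros continuous_on_subset[OF assms(1) cb])
  have "integral (cbox a b) (\<lambda>y. (e y)\<^sup>2) \<le> integral S (\<lambda>y. (e y)\<^sup>2)"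
    by (rule integral_subset_le[OF cb])
       (auto intro!: integrable_continuous ce integrable_continuous_compact compact_S continuous_intros assms(1))
  also have "\<dots> = 0" using assms(2) by (simp flip: L2norm_square)
  finally have "integral (cbox a b) (\<lambda>y. (e y)\<^sup>2) = 0"
    using integral_square_nonneg[of "cbox a b" e] by simp
  then have "\<forall>y\<in>cbox a b. (e y)\<^sup>2 = 0"
    using integral_cbox_eq_0_iff[OF ce ne] by simp
  then show ?thesis using ab(2) box_subset_cbox by auto
qed

lemma L2norm_partial_eq_0:
  assumes "real_polynomial_function e" "L2norm S e = 0"
  shows "L2norm S (partial i e) = 0"
proof -
  have ce: "continuous_on A e" for A
    using assms(1) by (rule continuous_on_real_polynomial_function)
  have "partial i e x = 0" if "x \<in> interior S" for x
  proof -
    obtain r where r: "0 < r" "ball x r \<subseteq> interior S"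
      using \<open>x \<in> interior S\<close> open_interior[of S] unfolding open_contains_ball by blast
    then have "e y = 0" if "y \<in> ball x r" for y
      using L2norm_eq_0_imp_vanishes_on_interior[OF ce assms(2)] that by blast
    then show ?thesis by (rule partial_eq_0_if_locally_0[OF r(1)])
  qed
  moreover have "continuous_on (closure (interior S)) (partial i e)"
    by (intro continuous_on_real_polynomial_function real_polynomial_function_partial assms(1))
  ultimately have "partial i e x = 0" if "x \<in> S" for x
    using continuous_constant_on_closure[of "interior S"] that closure_interior by metis
  then show ?thesis
    by (simp add: L2norm_def integral_cong[of S _ "\<lambda>_. 0"])
qed

end

lemma add_le_sqrt_2_mult_sqrt_sum_squares:
  fixes a b :: real
  shows "a + b \<le> sqrt 2 * sqrt (a\<^sup>2 + b\<^sup>2)"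
proof -
  have "(a + b)\<^sup>2 \<le> 2 * (a\<^sup>2 + b\<^sup>2)"
    using zero_le_power2[of "a - b"] by (simp add: power2_eq_square algebra_simps)
  then have "a + b \<le> sqrt (2 * (a\<^sup>2 + b\<^sup>2))" by (rule real_le_rsqrt)
  then show ?thesis by (simp only: real_sqrt_mult)
qed

context regular_compact_L2
begin

lemma L2norm_partial_le_ratio:
  assumes "real_polynomial_function e"
  shows "L2norm S (partial i e) \<le> L2norm S (partial i e) / L2norm S e * L2norm S e"
  using L2norm_partial_eq_0[OF assms] by (cases "L2norm S e = 0") auto

lemma L2norm_partial_orthogonal_sum:
  assumes u: "real_polynomial_function u" and e: "real_polynomial_function e"
    and "L2inner S u e = 0" "0 \<le> C"
    and "L2norm S (partial i u) \<le> C * L2norm S u" "L2norm S (partial i e) \<le> C * L2norm S e"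
  shows "L2norm S (partial i (\<lambda>x. u x + t * e x)) \<le> sqrt 2 * C * L2norm S (\<lambda>x. u x + t * e x)"
proof -
  have "partial i (\<lambda>x. u x + t * e x) = (\<lambda>x. partial i u x + t * partial i e x)"
    using u e by (simp add: fun_eq_iff partial_add partial_cmult differentiable_mult
        differentiable_at_real_polynomial_function)
  then have "L2norm S (partial i (\<lambda>x. u x + t * e x))
      \<le> L2norm S (partial i u) + \<bar>t\<bar> * L2norm S (partial i e)"
    using u e by (simp add: L2norm_add_le continuous_on_real_polynomial_function
        real_polynomial_function_partial)
  also have "\<dots> \<le> C * (L2norm S u + \<bar>t\<bar> * L2norm S e)"
    using assms(5,6) mult_left_mono[OF assms(6) abs_ge_zero[of t]] by (simp add: algebra_simps)
  also have "\<dots> \<le> C * (sqrt 2 * sqrt ((L2norm S u)\<^sup>2 + (\<bar>t\<bar> * L2norm S e)\<^sup>2))"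
    by (rule mult_left_mono[OF add_le_sqrt_2_mult_sqrt_sum_squares \<open>0 \<le> C\<close>])
  also have "sqrt ((L2norm S u)\<^sup>2 + (\<bar>t\<bar> * L2norm S e)\<^sup>2) = L2norm S (\<lambda>x. u x + t * e x)"
    using u e assms(3) by (simp add: L2norm_add_orthogonal continuous_on_real_polynomial_function)
  finally show ?thesis by (simp add: mult_ac)
qed

text \<open>The induction orthogonalises the functions against the newly added one; the
  resulting constant grows like \<open>\<surd>2\<close> to the number of functions.\<close>
lemma L2norm_partial_bounded_on_span:
  assumes "finite J" "\<And>j. j \<in> J \<Longrightarrow> real_polynomial_function (b j)"
  shows "\<exists>C\<ge>0. \<forall>c. L2norm S (partial i (\<lambda>x. \<Sum>j\<in>J. c j * b j x))
                    \<le> C * L2norm S (\<lambda>x. \<Sum>j\<in>J. c j * b j x)"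
  using assms
proof (induction J arbitrary: b rule: finite_induct)
  case empty
  show ?case by (auto simp: partial_const L2norm_def)
next
  case (insert k J)
  define e where "e = b k"
  define \<beta> where "\<beta> j = L2inner S (b j) e / L2inner S e e" for j
  define b' where "b' j x = b j x - \<beta> j * e x" for j x
  have e: "real_polynomial_function e"
    using insert.prems by (simp add: e_def)
  have b': "real_polynomial_function (b' j)" if "j \<in> J" for j
    using insert.prems that e unfolding b'_def
    by (intro real_polynomial_function_diff real_polynomial_function.intros(2,4)) auto
  obtain C where "0 \<le> C" and C: "\<forall>c. L2norm S (partial i (\<lambda>x. \<Sum>j\<in>J. c j * b' j x))
                    \<le> C * L2norm S (\<lambda>x. \<Sum>j\<in>J. c j * b' j x)"
    using insert.IH[of b'] b' by meson
  define K where "K = max C (L2norm S (partial i e) / L2norm S e)"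
  show ?case
  proof (intro exI[of _ "sqrt 2 * K"] conjI allI)
    show "0 \<le> sqrt 2 * K" using \<open>0 \<le> C\<close> by (simp add: K_def)
    fix c
    define u where "u x = (\<Sum>j\<in>J. c j * b' j x)" for x
    define t where "t = c k + (\<Sum>j\<in>J. c j * \<beta> j)"
    have u: "real_polynomial_function u"
      unfolding u_def[abs_def] using b'
      by (intro real_polynomial_function_sum ballI real_polynomial_function.intros(2,4) insert.hyps)
    have sum_eq: "(\<lambda>x. \<Sum>j\<in>insert k J. c j * b j x) = (\<lambda>x. u x + t * e x)"
      using insert.hyps by (simp add: fun_eq_iff u_def t_def b'_def e_def algebra_simps
          sum_subtractf sum_distrib_left sum_distrib_right)
    have "L2inner S u e = (\<Sum>j\<in>J. c j * L2inner S (b' j) e)"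
      unfolding u_def using insert.hyps b' e
      by (simp add: L2inner_sum_left L2inner_cmult_left continuous_intros
          continuous_on_real_polynomial_function)
    also have "\<dots> = 0"
    proof -
      have "L2inner S (b' j) e = 0" if "j \<in> J" for j
        unfolding b'_def \<beta>_def using insert.prems that e
        by (intro L2inner_orthogonalize continuous_on_real_polynomial_function) auto
      then show ?thesis by simp
    qed
    finally have "L2inner S u e = 0" .
    moreover have "L2norm S (partial i u) \<le> K * L2norm S u"
      using spec[OF C, of c] mult_right_mono[of C K "L2norm S u"] by (simp add: u_def[abs_def] K_def L2norm_nonneg)
    moreover have "L2norm S (partial i e) \<le> K * L2norm S e"
    proof -
      have "L2norm S (partial i e) / L2norm S e * L2norm S e \<le> K * L2norm S e"
        unfolding K_def by (intro mult_right_mono max.cobounded2 L2norm_nonneg)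
      then show ?thesis using L2norm_partial_le_ratio[OF e, of i] by linarith
    qed
    ultimately show "L2norm S (partial i (\<lambda>x. \<Sum>j\<in>insert k J. c j * b j x))
        \<le> sqrt 2 * K * L2norm S (\<lambda>x. \<Sum>j\<in>insert k J. c j * b j x)"
      unfolding sum_eq using \<open>0 \<le> C\<close> by (intro L2norm_partial_orthogonal_sum u e) (auto simp: K_def)
  qed
qed

end

lemma Basis_real_vec: "(Basis :: (real^'n::finite) set) = range (\<lambda>i. axis i 1)"
  by (auto simp: Basis_vec_def)

lemma unit_simplex_eq_convex_hull: "(unit_simplex :: (real^'n::finite) set) = convex hull (insert 0 Basis)"
proof -
  have "inj (\<lambda>i::'n. axis i (1::real))"
    by (auto simp: inj_def axis_eq_axis)
  then have "(\<Sum>b\<in>Basis. x \<bullet> b) = (\<Sum>i\<in>UNIV. x $ i)" for x :: "real^'n"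
    unfolding Basis_real_vec by (simp add: sum.reindex cart_eq_inner_axis)
  then show ?thesis
    unfolding std_simplex unit_simplex_def by (auto simp: Basis_real_vec cart_eq_inner_axis)
qed

lemma interior_unit_simplex_nonempty: "interior (unit_simplex :: (real^'n::finite) set) \<noteq> {}"
  unfolding unit_simplex_eq_convex_hull using interior_std_simplex_nonempty by blast

lemma compact_unit_simplex: "compact (unit_simplex :: (real^'n::finite) set)"
  unfolding unit_simplex_eq_convex_hull by (rule finite_imp_compact_convex_hull) simp

lemma closure_interior_unit_simplex:
  "closure (interior unit_simplex) = (unit_simplex :: (real^'n::finite) set)"
proof -
  have "convex (unit_simplex :: (real^'n) set)"
    by (simp add: unit_simplex_eq_convex_hull)
  then have "closure (interior unit_simplex) = closure (unit_simplex :: (real^'n) set)"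
    by (rule convex_closure_interior[OF _ interior_unit_simplex_nonempty])
  also have "\<dots> = unit_simplex"
    by (simp add: compact_unit_simplex compact_imp_closed)
  finally show ?thesis .
qed

interpretation unit_simplex: regular_compact_L2 "unit_simplex :: (real^'n::finite) set"
  by standard (rule compact_unit_simplex, rule closure_interior_unit_simplex)

lemma partial_bounded_on_poly_fun:
  "\<exists>C. \<forall>(f :: real^'n::finite \<Rightarrow> real) i. poly_fun q f \<longrightarrow>
     L2norm unit_simplex (partial i f) \<le> C * L2norm unit_simplex f"
proof -
  have "\<exists>C\<ge>0. \<forall>f :: real^'n \<Rightarrow> real. poly_fun q f \<longrightarrow>
      L2norm unit_simplex (partial i f) \<le> C * L2norm unit_simplex f" for i
  proof -
    have "\<exists>C\<ge>0. \<forall>c. L2norm unit_simplex (partial i (\<lambda>x. \<Sum>\<alpha>\<in>multi_indices q. c \<alpha> * monomial \<alpha> x))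
        \<le> C * L2norm unit_simplex (\<lambda>x. \<Sum>\<alpha>\<in>multi_indices q. c \<alpha> * monomial \<alpha> x)"
      by (rule unit_simplex.L2norm_partial_bounded_on_span[of _ monomial])
         (simp_all add: finite_multi_indices real_polynomial_function_monomial)
    then show ?thesis unfolding poly_fun_iff_monomials by blast
  qed
  then obtain C where C: "\<forall>i. 0 \<le> C i \<and> (\<forall>f :: real^'n \<Rightarrow> real. poly_fun q f \<longrightarrow>
      L2norm unit_simplex (partial i f) \<le> C i * L2norm unit_simplex f)"
    by (metis choice)
  have "C i * L2norm unit_simplex f \<le> (\<Sum>i\<in>UNIV. C i) * L2norm unit_simplex f" for i and f :: "real^'n \<Rightarrow> real"
    using C by (intro mult_right_mono member_le_sum L2norm_nonneg) simp_all
  then show ?thesis using C order_trans by blast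
qed

lemma Cqd_admissible_nonneg:
  assumes "\<forall>(f :: real^'n::finite \<Rightarrow> real) i. poly_fun q f \<longrightarrow>
     L2norm unit_simplex (partial i f) \<le> C * L2norm unit_simplex f"
  shows "0 \<le> C"
proof -
  have "L2norm unit_simplex (partial i (\<lambda>_::real^'n. 1)) \<le> C * L2norm unit_simplex (\<lambda>_::real^'n. 1)" for i
    using assms poly_fun_const by blast
  then have "0 \<le> C * L2norm unit_simplex (\<lambda>_::real^'n. 1)"
    by (simp add: partial_const L2norm_def)
  with unit_simplex.L2norm_one_pos[OF interior_unit_simplex_nonempty[where 'n='n]] show ?thesis
    by (simp add: zero_le_mult_iff)
qed

lemma Cqd_nonneg: "0 \<le> Cqd TYPE('n::finite) q"
  unfolding Cqd_def using partial_bounded_on_poly_fun Cqd_admissible_nonneg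
  by (intro cInf_greatest) auto

lemma L2norm_partial_le_Cqd:
  fixes f :: "real^'n::finite \<Rightarrow> real"
  assumes "poly_fun q f"
  shows "L2norm unit_simplex (partial i f) \<le> Cqd TYPE('n) q * L2norm unit_simplex f"
proof (cases "L2norm unit_simplex f = 0")
  case True
  then show ?thesis
    using partial_bounded_on_poly_fun[where 'n='n, of q] assms by force
next
  case False
  then have pos: "0 < L2norm unit_simplex f" using L2norm_nonneg[of unit_simplex f] by simp
  have "L2norm unit_simplex (partial i f) / L2norm unit_simplex f \<le> Cqd TYPE('n) q"
    unfolding Cqd_def using partial_bounded_on_poly_fun[where 'n='n, of q] assms pos
    by (intro cInf_greatest) (auto simp: divide_le_eq)
  then show ?thesis using pos by (simp add: divide_le_eq mult.commute)
qed

text \<open>The change-of-variables theorems of HOL-Analysis require the index type of \<open>real^'m\<close>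
  to be well-ordered. A copy of a finite index type, ordered through \<open>to_nat\<close>, makes them
  available for arbitrary finite index types.\<close>
typedef 'a ranked = "UNIV :: 'a set" by simp

instance ranked :: (finite) finite
proof
  show "finite (UNIV :: 'a ranked set)"
    using finite_imageI[of "UNIV :: 'a set" Abs_ranked]
    by (simp add: type_definition.Abs_image[OF type_definition_ranked])
qed

instantiation ranked :: (finite) linorder
begin

definition less_eq_ranked :: "'a ranked \<Rightarrow> 'a ranked \<Rightarrow> bool" where
  "less_eq_ranked x y \<longleftrightarrow> to_nat (Rep_ranked x) \<le> to_nat (Rep_ranked y)"

definition less_ranked :: "'a ranked \<Rightarrow> 'a ranked \<Rightarrow> bool" where
  "less_ranked x y \<longleftrightarrow> to_nat (Rep_ranked x) < to_nat (Rep_ranked y)"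

instance
  by standard (auto simp: less_eq_ranked_def less_ranked_def Rep_ranked_inject[symmetric])

end

instance ranked :: (finite) wellorder
proof
  fix P :: "'a ranked \<Rightarrow> bool" and a :: "'a ranked"
  assume step: "\<And>x. (\<And>y. y < x \<Longrightarrow> P y) \<Longrightarrow> P x"
  show "P a"
  proof (induction "to_nat (Rep_ranked a)" arbitrary: a rule: less_induct)
    case less
    show ?case by (rule step) (use less in \<open>auto simp: less_ranked_def\<close>)
  qed
qed

definition ranked_vec :: "real^'n::finite \<Rightarrow> real^'n ranked" where
  "ranked_vec x = (\<chi> j. x $ Rep_ranked j)"

definition unranked_vec :: "real^'n::finite ranked \<Rightarrow> real^'n" where
  "unranked_vec y = (\<chi> i. y $ Abs_ranked i)"

lemma ranked_vec_unranked_vec [simp]: "ranked_vec (unranked_vec y) = y"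
  by (simp add: ranked_vec_def unranked_vec_def Rep_ranked_inverse vec_eq_iff)

lemma unranked_vec_ranked_vec [simp]: "unranked_vec (ranked_vec x) = x"
  by (simp add: ranked_vec_def unranked_vec_def Abs_ranked_inverse vec_eq_iff)

lemma linear_ranked_vec: "linear ranked_vec"
  by (auto simp: linear_iff ranked_vec_def vec_eq_iff)

lemma linear_unranked_vec: "linear unranked_vec"
  by (auto simp: linear_iff unranked_vec_def vec_eq_iff)

lemma unranked_vec_cbox: "unranked_vec ` cbox u v = cbox (unranked_vec u) (unranked_vec v)"
proof
  show "unranked_vec ` cbox u v \<subseteq> cbox (unranked_vec u) (unranked_vec v)"
    by (auto simp: mem_box_cart unranked_vec_def)
  show "cbox (unranked_vec u) (unranked_vec v) \<subseteq> unranked_vec ` cbox u v"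
  proof
    fix x
    assume "x \<in> cbox (unranked_vec u) (unranked_vec v)"
    then have "ranked_vec x \<in> cbox u v"
      unfolding mem_box_cart ranked_vec_def unranked_vec_def
      by (metis Rep_ranked_inverse vec_lambda_beta)
    then show "x \<in> unranked_vec ` cbox u v" by (metis unranked_vec_ranked_vec image_eqI)
  qed
qed

lemma ranked_vec_cbox: "ranked_vec ` cbox u v = cbox (ranked_vec u) (ranked_vec v)"
proof -
  have "ranked_vec ` cbox u v = ranked_vec ` unranked_vec ` cbox (ranked_vec u) (ranked_vec v)"
    by (simp add: unranked_vec_cbox)
  also have "\<dots> = cbox (ranked_vec u) (ranked_vec v)"
    by (simp add: image_image)
  finally show ?thesis .
qed

lemma content_unranked_vec_cbox:
  "Henstock_Kurzweil_Integration.content (unranked_vec ` cbox u v)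
    = 1 * Henstock_Kurzweil_Integration.content (cbox u v)"
proof -
  have "(\<Prod>i\<in>UNIV. unranked_vec v $ i - unranked_vec u $ i) = (\<Prod>j\<in>UNIV. v $ j - u $ j)"
    unfolding unranked_vec_def
    by (auto intro!: prod.reindex_bij_witness[where i=Rep_ranked and j=Abs_ranked]
        simp: Rep_ranked_inverse Abs_ranked_inverse)
  moreover have "cbox (unranked_vec u) (unranked_vec v) = {} \<longleftrightarrow> cbox u v = {}"
    by (metis unranked_vec_cbox image_is_empty)
  ultimately show ?thesis
    unfolding unranked_vec_cbox content_cbox_if_cart by simp
qed

lemma integral_ranked_vec_image:
  fixes f :: "real^'n::finite \<Rightarrow> real"
  assumes "compact A" "continuous_on A f"
  shows "integral A f = integral (ranked_vec ` A) (\<lambda>y. f (unranked_vec y))"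
proof -
  obtain a where a: "A \<subseteq> cbox (- a) a"
    using bounded_subset_cbox_symmetric[OF compact_imp_bounded[OF assms(1)]] by blast
  define fA where "fA x = (if x \<in> A then f x else 0)" for x
  have "(fA has_integral integral A f) (cbox (- a) a)"
    unfolding fA_def has_integral_restrict[OF a]
    by (intro integrable_integral integrable_continuous_compact assms)
  then have "((\<lambda>y. fA (unranked_vec y)) has_integral (1 / 1) *\<^sub>R integral A f) (ranked_vec ` cbox (- a) a)"
    using linear_continuous_at[OF linear_conv_bounded_linear[THEN iffD1, OF linear_unranked_vec]]
    by (intro has_integral_twiddle[where r=1])
       (auto simp: unranked_vec_cbox ranked_vec_cbox content_unranked_vec_cbox[unfolded unranked_vec_cbox])
  moreover have "(\<lambda>y. fA (unranked_vec y)) = (\<lambda>y. if y \<in> ranked_vec ` A then f (unranked_vec y) else 0)"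
    by (auto simp: fA_def fun_eq_iff image_iff)
  ultimately have "((\<lambda>y. f (unranked_vec y)) has_integral integral A f) (ranked_vec ` A)"
    using a by (simp add: has_integral_restrict image_mono)
  then show ?thesis by (simp add: integral_unique)
qed

lemma integral_affine_image_wellorder:
  fixes L :: "real^'m::{finite,wellorder} \<Rightarrow> real^'m::_"
  assumes L: "linear L" "inj L" and "compact S"
    and k: "continuous_on ((\<lambda>y. c + L y) ` S) k"
  shows "integral ((\<lambda>y. c + L y) ` S) k = \<bar>det (matrix L)\<bar> * integral S (\<lambda>y. k (c + L y))"
proof -
  define g where "g y = c + L y" for y
  define F where "F x = (vec (k x) :: real^1)" for x
  obtain Li where Li: "linear Li" "Li \<circ> L = id"
    using linear_injective_left_inverse[OF L] by blast
  have cont: "continuous_on A f" if "linear f" for A and f :: "real^'m::_ \<Rightarrow> real^'m::_"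
    using linear_continuous_on[OF linear_conv_bounded_linear[THEN iffD1, OF that]]
      continuous_on_subset by blast
  have "compact (g ` S)"
    unfolding g_def by (intro compact_continuous_image assms(3) continuous_intros cont L(1))
  moreover have kg: "continuous_on (g ` S) k"
    using k by (simp add: g_def[abs_def])
  ultimately have "F integrable_on g ` S" "(\<lambda>x. norm (F x)) integrable_on g ` S"
    unfolding F_def vec_def
    by (intro integrable_continuous_compact continuous_on_vec_lambda continuous_intros; simp)+
  then have "F absolutely_integrable_on g ` S"
    by (simp add: absolutely_integrable_on_def)
  moreover have "(g has_derivative L) (at y within S)" for y
    unfolding g_def using has_derivative_add[OF has_derivative_const linear_imp_has_derivative[OF L(1)]]
    by (simp add: has_derivative_at_withinI)
  moreover have "Li (g y - c) = y" for y
    using Li(2) by (simp add: g_def pointfree_idE)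
  moreover have "continuous_on (g ` S) (\<lambda>z. Li (z - c))"
    by (intro continuous_on_compose2[OF cont[OF Li(1)]] continuous_intros) auto
  ultimately have cov: "integral S (\<lambda>y. \<bar>det (matrix L)\<bar> *\<^sub>R F (g y)) = integral (g ` S) F"
    using has_absolute_integral_change_of_variables_invertible[of S g "\<lambda>_. L" "\<lambda>z. Li (z - c)" F]
    by blast
  have "integral (g ` S) k = integral (g ` S) F $ 1"
    by (subst integral_on_1_eq) (simp add: F_def)
  also have "\<dots> = integral S (\<lambda>y. \<bar>det (matrix L)\<bar> * k (g y))"
    by (subst cov[symmetric], subst integral_on_1_eq) (simp add: F_def)
  finally show ?thesis
    by (simp add: g_def[abs_def])
qed

lemma integral_change_of_variables_affine:
  fixes L :: "real^'n::finite \<Rightarrow> real^'n"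
  assumes L: "linear L" "inj L"
  shows "\<exists>J>0. \<forall>S (k :: real^'n \<Rightarrow> real). compact S \<longrightarrow> continuous_on ((\<lambda>x. a + L x) ` S) k \<longrightarrow>
       integral ((\<lambda>x. a + L x) ` S) k = J * integral S (\<lambda>x. k (a + L x))"
proof -
  define L' where "L' y = ranked_vec (L (unranked_vec y))" for y
  have lin: "linear L'"
    unfolding L'_def[abs_def]
    using linear_compose[OF linear_compose[OF linear_unranked_vec L(1)] linear_ranked_vec]
    by (simp add: o_def)
  have "inj L'"
  proof (rule injI)
    fix x y
    assume "L' x = L' y"
    then have "unranked_vec (L' x) = unranked_vec (L' y)" by simp
    then have "unranked_vec x = unranked_vec y" using L(2) by (simp add: L'_def inj_eq)
    then show "x = y" by (metis ranked_vec_unranked_vec)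
  qed
  have affine: "ranked_vec (a + L x) = ranked_vec a + L' (ranked_vec x)" for x
    by (simp add: L'_def linear_add[OF linear_ranked_vec])
  have cont: "continuous_on A f" if "linear f" for A and f :: "real^_ \<Rightarrow> real^_"
    using linear_continuous_on[OF linear_conv_bounded_linear[THEN iffD1, OF that]]
      continuous_on_subset by blast
  have cov: "integral ((\<lambda>x. a + L x) ` S) k = \<bar>det (matrix L')\<bar> * integral S (\<lambda>x. k (a + L x))"
    if S: "compact S" and k: "continuous_on ((\<lambda>x. a + L x) ` S) k" for S and k :: "real^'n \<Rightarrow> real"
  proof -
    have "compact ((\<lambda>x. a + L x) ` S)"
      by (intro compact_continuous_image S continuous_intros cont L(1))
    then have "integral ((\<lambda>x. a + L x) ` S) k
        = integral (ranked_vec ` (\<lambda>x. a + L x) ` S) (\<lambda>y. k (unranked_vec y))"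
      by (rule integral_ranked_vec_image[OF _ k])
    also have "ranked_vec ` (\<lambda>x. a + L x) ` S = (\<lambda>y. ranked_vec a + L' y) ` ranked_vec ` S"
      by (simp add: image_image affine)
    also have "integral \<dots> (\<lambda>y. k (unranked_vec y))
        = \<bar>det (matrix L')\<bar> * integral (ranked_vec ` S) (\<lambda>y. k (unranked_vec (ranked_vec a + L' y)))"
    proof (rule integral_affine_image_wellorder[OF lin \<open>inj L'\<close>])
      show "compact (ranked_vec ` S)"
        by (intro compact_continuous_image S cont linear_ranked_vec)
      show "continuous_on ((\<lambda>y. ranked_vec a + L' y) ` ranked_vec ` S) (\<lambda>y. k (unranked_vec y))"
        using k by (intro continuous_on_compose2[OF k cont[OF linear_unranked_vec]])
          (auto simp flip: affine)
    qed
    also have "(\<lambda>y. k (unranked_vec (ranked_vec a + L' y))) = (\<lambda>y. k (a + L (unranked_vec y)))"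
      by (simp add: L'_def linear_add[OF linear_unranked_vec])
    also have "integral (ranked_vec ` S) \<dots> = integral S (\<lambda>x. k (a + L x))"
      by (rule integral_ranked_vec_image[OF S, symmetric])
         (intro continuous_on_compose2[OF k] continuous_intros cont L(1); auto)
    finally show ?thesis .
  qed
  have "0 < \<bar>det (matrix L')\<bar>"
    using det_nz_iff_inj[OF lin] \<open>inj L'\<close> by simp
  with cov show ?thesis by blast
qed

lemma L2norm_affine_image:
  fixes L :: "real^'n::finite \<Rightarrow> real^'n"
  assumes "linear L" "inj L"
  shows "\<exists>c>0. \<forall>S f. compact S \<longrightarrow> continuous_on ((\<lambda>x. a + L x) ` S) f \<longrightarrow>
       L2norm ((\<lambda>x. a + L x) ` S) f = c * L2norm S (\<lambda>x. f (a + L x))"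
proof -
  obtain J where "0 < J" and cov: "\<forall>S (k :: real^'n \<Rightarrow> real). compact S \<longrightarrow> continuous_on ((\<lambda>x. a + L x) ` S) k \<longrightarrow>
       integral ((\<lambda>x. a + L x) ` S) k = J * integral S (\<lambda>x. k (a + L x))"
    using integral_change_of_variables_affine[OF assms, of a] by blast
  have "L2norm ((\<lambda>x. a + L x) ` S) f = sqrt J * L2norm S (\<lambda>x. f (a + L x))"
    if "compact S" "continuous_on ((\<lambda>x. a + L x) ` S) f" for S f
    using that by (simp add: L2norm_def cov continuous_intros real_sqrt_mult)
  with \<open>0 < J\<close> show ?thesis by (intro exI[of _ "sqrt J"]) auto
qed

lemma simplex_eq_affine_image_unit_simplex:
  fixes K :: "(real^'n::finite) set"
  assumes "int CARD('n) simplex K"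
  obtains a and L :: "real^'n \<Rightarrow> real^'n"
  where "linear L" "inj L" "K = (\<lambda>x. a + L x) ` unit_simplex"
proof -
  obtain C where C: "\<not> affine_dependent C" "card C = CARD('n) + 1" "K = convex hull C"
    using assms unfolding simplex_def by (auto simp flip: of_nat_Suc)
  then have "finite C" using card.infinite by fastforce
  obtain a where "a \<in> C" using C(2) by fastforce
  define C' where "C' = C - {a}"
  have C_eq: "C = insert a C'" "a \<notin> C'" using \<open>a \<in> C\<close> by (auto simp: C'_def)
  have "card C' = CARD('n)" using C(2) \<open>finite C\<close> \<open>a \<in> C\<close> by (simp add: C'_def)
  then obtain \<phi> where \<phi>: "bij_betw \<phi> (UNIV :: 'n set) C'"
    using finite_same_card_bij[of "UNIV :: 'n set" C'] \<open>finite C\<close> by (auto simp: C'_def)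
  define \<psi> where "\<psi> i = \<phi> i - a" for i
  define L where "L x = (\<Sum>i\<in>UNIV. x $ i *\<^sub>R \<psi> i)" for x :: "real^'n"
  have lin: "linear L"
    unfolding L_def[abs_def] by (auto simp: linear_iff sum.distrib scaleR_add_left scaleR_sum_right)
  have L_axis: "L (axis i 1) = \<psi> i" for i
    unfolding L_def by (simp add: axis_def if_distrib[of "\<lambda>t. t *\<^sub>R _"] cong: if_cong)
  have "inj \<psi>" using \<phi> by (auto simp: \<psi>_def bij_betw_def inj_def)
  have "(\<lambda>x. - a + x) ` C' = range \<psi>"
    using \<phi> by (auto simp: \<psi>_def bij_betw_def)
  then have "independent (range \<psi>)"
    using C(1) affine_dependent_iff_dependent[OF C_eq(2)] C_eq(1) by simp
  then have indep: "\<forall>v\<in>range \<psi>. c v = 0" if "(\<Sum>v\<in>range \<psi>. c v *\<^sub>R v) = 0" for c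
    using that unfolding independent_explicit by blast
  have "z = 0" if "L z = 0" for z
  proof -
    have "(\<Sum>v\<in>range \<psi>. z $ inv \<psi> v *\<^sub>R v) = L z"
      by (simp add: sum.reindex[OF \<open>inj \<psi>\<close>] L_def inv_f_f[OF \<open>inj \<psi>\<close>])
    then have "\<forall>v\<in>range \<psi>. z $ inv \<psi> v = 0"
      using \<open>L z = 0\<close> by (intro indep) simp
    then show ?thesis by (simp add: vec_eq_iff inv_f_f[OF \<open>inj \<psi>\<close>])
  qed
  then have "inj L" using lin by (simp add: linear_injective_0)
  have "L ` insert 0 Basis = insert 0 (range \<psi>)"
    by (auto simp: Basis_real_vec L_axis linear_0[OF lin] image_image)
  then have vertices: "(+) a ` L ` insert 0 Basis = C"
    using \<phi> C_eq by (auto simp: \<psi>_def bij_betw_def image_image)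
  have "(\<lambda>x. a + L x) ` unit_simplex = (+) a ` L ` (convex hull (insert 0 Basis))"
    by (simp add: unit_simplex_eq_convex_hull image_image)
  also have "\<dots> = convex hull C"
    by (simp only: convex_hull_linear_image[OF lin] convex_hull_translation[symmetric] vertices)
  finally have "K = (\<lambda>x. a + L x) ` unit_simplex"
    using C(3) by simp
  with lin \<open>inj L\<close> show ?thesis by (rule that)
qed

lemma norm_vec_square: "(norm (z :: real^'n::finite))\<^sup>2 = (\<Sum>i\<in>UNIV. (z $ i)\<^sup>2)"
  unfolding power2_norm_eq_inner inner_vec_def by (simp add: power2_eq_square)

lemma unit_simplex_diameter:
  assumes "x \<in> unit_simplex" "y \<in> unit_simplex"
  shows "norm (x - y :: real^'n::finite) \<le> sqrt 2"
proof (rule real_le_rsqrt)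
  have x: "\<And>i. 0 \<le> x $ i" "(\<Sum>i\<in>UNIV. x $ i) \<le> 1" and y: "\<And>i. 0 \<le> y $ i" "(\<Sum>i\<in>UNIV. y $ i) \<le> 1"
    using assms by (auto simp: unit_simplex_def)
  have "(x $ i - y $ i)\<^sup>2 \<le> x $ i + y $ i" for i
  proof -
    have "x $ i \<le> 1" "y $ i \<le> 1"
      using member_le_sum[of i UNIV "\<lambda>i. x $ i"] member_le_sum[of i UNIV "\<lambda>i. y $ i"] x y by auto
    then have "x $ i * x $ i \<le> x $ i" "y $ i * y $ i \<le> y $ i" "0 \<le> x $ i * y $ i"
      using x(1)[of i] y(1)[of i] by (simp_all add: mult_left_le)
    then show ?thesis by (simp add: power2_eq_square algebra_simps)
  qed
  then have "(\<Sum>i\<in>UNIV. (x $ i - y $ i)\<^sup>2) \<le> (\<Sum>i\<in>UNIV. x $ i + y $ i)"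
    by (rule sum_mono)
  also have "\<dots> \<le> 2" using x(2) y(2) by (simp add: sum.distrib)
  finally show "(norm (x - y))\<^sup>2 \<le> 2"
    by (simp add: norm_vec_square)
qed

text \<open>Two antipodal points of a ball in \<open>K\<close> come from points of the unit simplex, whose
  diameter is \<open>\<surd>2\<close>.\<close>
lemma inball_radius_bound:
  fixes L :: "real^'n::finite \<Rightarrow> real^'n"
  assumes "linear L" "inj L" "K = (\<lambda>x. a + L x) ` unit_simplex" "ball c r \<subseteq> K"
  shows "2 * r * norm z \<le> sqrt 2 * norm (L z)"
proof (cases "0 < r \<and> z \<noteq> 0")
  case False
  then have "2 * r * norm z \<le> 0"
    by (cases "z = 0") (auto intro: mult_nonpos_nonneg)
  moreover have "0 \<le> sqrt 2 * norm (L z)" by simp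
  ultimately show ?thesis by linarith
next
  case True
  then have Lz: "0 < norm (L z)" using assms(1,2) by (auto simp: linear_injective_0)
  have bound: "2 * s * norm z \<le> sqrt 2 * norm (L z)" if s: "0 < s" "s < r" for s
  proof -
    define u where "u = (s / norm (L z)) *\<^sub>R L z"
    have "norm u = s" using s Lz by (simp add: u_def)
    then have "c + u \<in> K" "c - u \<in> K" using assms(4) s by (auto simp: dist_norm)
    then obtain p q where p: "p \<in> unit_simplex" "c + u = a + L p"
      and q: "q \<in> unit_simplex" "c - u = a + L q" using assms(3) by blast
    have "L p = c + u - a" "L q = c - u - a"
      using p(2) q(2) by (simp_all add: algebra_simps)
    then have "L (p - q) = 2 *\<^sub>R u"
      by (simp add: linear_diff[OF assms(1)] scaleR_2)
    also have "\<dots> = L ((2 * s / norm (L z)) *\<^sub>R z)"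
      by (simp add: u_def linear_scale[OF assms(1)])
    finally have "p - q = (2 * s / norm (L z)) *\<^sub>R z"
      using assms(2) by (simp add: inj_eq)
    then have "2 * s / norm (L z) * norm z \<le> sqrt 2"
      using unit_simplex_diameter[OF p(1) q(1)] s by simp
    then show ?thesis using Lz by (simp add: field_simps)
  qed
  have "r \<le> sqrt 2 * norm (L z) / (2 * norm z)"
  proof (rule dense_le_bounded[of 0])
    show "0 < r" using True by simp
    fix s
    assume "0 < s" "s < r"
    with bound[OF this] True show "s \<le> sqrt 2 * norm (L z) / (2 * norm z)"
      by (simp add: pos_le_divide_eq mult_ac)
  qed
  then show ?thesis using True by (simp add: pos_le_divide_eq mult_ac)
qed

lemma inball_diam_mult_norm_le:
  fixes L :: "real^'n::finite \<Rightarrow> real^'n"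
  assumes "linear L" "inj L" "K = (\<lambda>x. a + L x) ` unit_simplex"
  shows "inball_diam K * norm z \<le> sqrt 2 * norm (L z)"
proof (cases "z = 0")
  case False
  have "ball a (-1) \<subseteq> K" by (simp add: ball_empty)
  then have "Sup {r. \<exists>c. ball c r \<subseteq> K} \<le> sqrt 2 * norm (L z) / (2 * norm z)"
    using inball_radius_bound[OF assms] False by (intro cSup_least) (auto simp: field_simps)
  then show ?thesis using False by (simp add: inball_diam_def field_simps)
qed (simp add: linear_0[OF assms(1)])

lemma inball_diam_pos:
  fixes L :: "real^'n::finite \<Rightarrow> real^'n"
  assumes "linear L" "inj L" "K = (\<lambda>x. a + L x) ` unit_simplex"
  shows "0 < inball_diam K"
proof -
  have "K = (+) a ` L ` unit_simplex" using assms(3) by (simp add: image_image)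
  then have "interior K \<noteq> {}"
    by (simp add: interior_translation interior_injective_linear_image[OF assms(1,2)]
        interior_unit_simplex_nonempty)
  then obtain c where "c \<in> interior K" by blast
  then obtain r where "0 < r" "ball c r \<subseteq> K"
    unfolding mem_interior by blast
  moreover have "bdd_above {r. \<exists>c. ball c r \<subseteq> K}"
  proof
    fix r
    assume "r \<in> {r. \<exists>c. ball c r \<subseteq> K}"
    then show "r \<le> sqrt 2 * norm (L (axis undefined 1)) / 2"
      using inball_radius_bound[OF assms, of _ r "axis undefined 1"] by (auto simp: field_simps)
  qed
  ultimately have "r \<le> Sup {r. \<exists>c. ball c r \<subseteq> K}" by (auto intro: cSup_upper)
  with \<open>0 < r\<close> show ?thesis by (simp add: inball_diam_def)
qed

lemma diameter_le_shape_reg_mult_inball_diam: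
  assumes "simplicial_mesh T" "K \<in> T" "0 < inball_diam K"
  shows "diameter K \<le> shape_reg T * inball_diam K"
proof -
  have "diameter K / inball_diam K \<le> shape_reg T"
    using assms(1,2) unfolding shape_reg_def simplicial_mesh_def by (intro Max_ge) auto
  then show ?thesis using assms(3) by (simp add: divide_le_eq)
qed

lemma L2norm_cmult: "L2norm S (\<lambda>x. c * f x) = \<bar>c\<bar> * L2norm S f"
  by (simp add: L2norm_def power_mult_distrib real_sqrt_mult)

lemma L2norm_mono:
  fixes f g :: "real^'n::finite \<Rightarrow> real"
  assumes "compact S" "continuous_on S f" "continuous_on S g" "\<And>x. x \<in> S \<Longrightarrow> \<bar>f x\<bar> \<le> \<bar>g x\<bar>"
  shows "L2norm S f \<le> L2norm S g"
  unfolding L2norm_def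
  using assms by (intro real_sqrt_le_mono integral_le integrable_continuous_compact continuous_intros)
    (auto simp: abs_le_square_iff)

lemma L2norm_vec_square:
  fixes w :: "real^'n::finite \<Rightarrow> real^'n"
  assumes "compact S" "\<And>k. continuous_on S (\<lambda>x. w x $ k)"
  shows "(L2norm_vec S w)\<^sup>2 = (\<Sum>k\<in>UNIV. (L2norm S (\<lambda>x. w x $ k))\<^sup>2)"
  using assms by (simp add: L2norm_vec_eq_L2norm_norm L2norm_square norm_vec_square integral_sum
      integrable_continuous_compact continuous_intros)

lemma poly_fun_components_differentiable:
  assumes "\<And>i. poly_fun q (\<lambda>x. v x $ i)"
  shows "v differentiable (at x)"
  unfolding differentiable_componentwise_within[of v]
  using assms by (auto simp: Basis_vec_def cart_eq_inner_axis
      intro: differentiable_at_real_polynomial_function poly_fun_imp_real_polynomial_function)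

lemma continuous_on_polynomial_components:
  assumes "\<And>i. poly_fun q (\<lambda>x. v x $ i)"
  shows "continuous_on S v"
  by (intro differentiable_imp_continuous_on differentiable_at_imp_differentiable_on
      poly_fun_components_differentiable[OF assms])

lemma continuous_on_divergence_polynomial:
  assumes "\<And>i. poly_fun q (\<lambda>x. v x $ i)"
  shows "continuous_on S (divergence v)"
  unfolding divergence_def[abs_def] using assms
  by (intro continuous_on_sum continuous_on_real_polynomial_function real_polynomial_function_partial
      poly_fun_imp_real_polynomial_function) auto

lemma L2norm_divergence_le_Cqd:
  fixes w :: "real^'n::finite \<Rightarrow> real^'n"
  assumes poly: "\<And>k. poly_fun q (\<lambda>z. w z $ k)"
  shows "L2norm unit_simplex (divergence w)
    \<le> sqrt CARD('n) * Cqd TYPE('n) q * L2norm_vec unit_simplex w"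
proof -
  let ?N = "L2norm (unit_simplex :: (real^'n) set)" and ?C = "Cqd TYPE('n) q"
  have rpf: "real_polynomial_function (\<lambda>z. w z $ k)" for k
    using poly by (rule poly_fun_imp_real_polynomial_function)
  have cont: "continuous_on A (\<lambda>z. w z $ k)" "continuous_on A (partial k (\<lambda>z. w z $ k))" for A k
    by (simp_all add: rpf continuous_on_real_polynomial_function real_polynomial_function_partial)
  have "(?N (divergence w))\<^sup>2 = integral unit_simplex (\<lambda>z. (\<Sum>k\<in>UNIV. partial k (\<lambda>z. w z $ k) z)\<^sup>2)"
    by (simp add: L2norm_square divergence_def)
  also have "\<dots> \<le> integral unit_simplex (\<lambda>z. CARD('n) * (\<Sum>k\<in>UNIV. (partial k (\<lambda>z. w z $ k) z)\<^sup>2))"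
    using sum_squared_le_sum_of_squares[of _ UNIV]
    by (intro integral_le integrable_continuous_compact unit_simplex.compact_S continuous_intros cont)
      (simp add: mult.commute)
  also have "\<dots> = CARD('n) * (\<Sum>k\<in>UNIV. (?N (partial k (\<lambda>z. w z $ k)))\<^sup>2)"
    by (simp add: L2norm_square integral_sum integrable_continuous_compact
        unit_simplex.compact_S continuous_intros cont)
  also have "\<dots> \<le> CARD('n) * (\<Sum>k\<in>UNIV. (?C * ?N (\<lambda>z. w z $ k))\<^sup>2)"
    by (intro mult_left_mono sum_mono power_mono L2norm_partial_le_Cqd poly L2norm_nonneg) simp
  also have "\<dots> = (sqrt CARD('n) * ?C * L2norm_vec unit_simplex w)\<^sup>2"
    by (simp add: L2norm_vec_square[OF unit_simplex.compact_S cont(1)] power_mult_distrib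
        sum_distrib_left mult.assoc)
  finally show ?thesis
    by (rule power2_le_imp_le) (simp add: Cqd_nonneg L2norm_vec_eq_L2norm_norm L2norm_nonneg)
qed

lemma inball_diam_mult_L2norm_vec_le:
  fixes L Li :: "real^'n::finite \<Rightarrow> real^'n"
  assumes "linear L" "inj L" "K = (\<lambda>x. a + L x) ` unit_simplex" "\<And>y. L (Li y) = y"
    and "linear Li" "compact S" "continuous_on S u"
  shows "inball_diam K * L2norm_vec S (\<lambda>z. Li (u z)) \<le> sqrt 2 * L2norm_vec S u"
proof -
  have pos: "0 < inball_diam K" by (rule inball_diam_pos[OF assms(1-3)])
  have pointwise: "\<bar>inball_diam K * norm (Li (u z))\<bar> \<le> \<bar>sqrt 2 * norm (u z)\<bar>" for z
    using inball_diam_mult_norm_le[OF assms(1-3), of "Li (u z)"] assms(4) pos by simp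
  have "continuous_on S (\<lambda>z. Li (u z))"
    using linear_continuous_on[OF linear_conv_bounded_linear[THEN iffD1, OF assms(5)]]
    by (intro continuous_on_compose2[OF _ assms(7)]) auto
  then have "L2norm S (\<lambda>z. inball_diam K * norm (Li (u z))) \<le> L2norm S (\<lambda>z. sqrt 2 * norm (u z))"
    by (intro L2norm_mono assms(6) continuous_intros assms(7) pointwise)
  then show ?thesis
    using pos by (simp add: L2norm_vec_eq_L2norm_norm L2norm_cmult)
qed

text \<open>The estimate on a single simplex, with the inscribed-ball diameter in place of the
  diameter; it is proved on the unit simplex through the Piola transform \<open>w\<close>.\<close>
lemma inball_diam_mult_L2norm_divergence_le:
  fixes L :: "real^'n::finite \<Rightarrow> real^'n" and v :: "real^'n \<Rightarrow> real^'n"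
  assumes L: "linear L" "inj L" and K: "K = (\<lambda>x. a + L x) ` unit_simplex"
    and poly_v: "\<And>i. poly_fun q (\<lambda>x. v x $ i)"
  shows "inball_diam K * L2norm K (divergence v)
    \<le> sqrt (2 * real CARD('n)) * Cqd TYPE('n) q * L2norm_vec K v"
proof -
  let ?d = "real CARD('n)" and ?C = "Cqd TYPE('n) q" and ?\<rho> = "inball_diam K"
  obtain Li where "linear Li" "L \<circ> Li = id"
    using linear_surjective_right_inverse[OF L(1) linear_inj_imp_surj[OF L]] by blast
  then have Li: "linear Li" "\<And>y. L (Li y) = y"
    by (simp_all add: pointfree_idE)
  obtain c where "0 < c" and transfer: "\<forall>S f. compact S \<longrightarrow> continuous_on ((\<lambda>x. a + L x) ` S) f \<longrightarrow>
      L2norm ((\<lambda>x. a + L x) ` S) f = c * L2norm S (\<lambda>x. f (a + L x))"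
    using L2norm_affine_image[OF L, of a] by blast
  define w where "w z = Li (v (a + L z))" for z
  have "poly_fun q (\<lambda>z. w z $ k)" for k
    unfolding w_def by (intro poly_fun_linear_image[OF Li(1)] poly_fun_comp_affine[OF L(1) poly_v])
  then have ref: "L2norm unit_simplex (divergence w) \<le> sqrt ?d * ?C * L2norm_vec unit_simplex w"
    by (rule L2norm_divergence_le_Cqd)
  have piola: "?\<rho> * L2norm_vec unit_simplex w \<le> sqrt 2 * L2norm_vec unit_simplex (\<lambda>z. v (a + L z))"
    unfolding w_def
    by (intro inball_diam_mult_L2norm_vec_le[OF L K Li(2,1) compact_unit_simplex]
        continuous_on_polynomial_components[OF poly_fun_comp_affine[OF L(1) poly_v]])
  have "divergence w = (\<lambda>z. divergence v (a + L z))"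
    unfolding w_def[abs_def] using divergence_affine_pullback[OF L(1) Li
        poly_fun_components_differentiable[OF poly_v]] by auto
  then have div: "L2norm K (divergence v) = c * L2norm unit_simplex (divergence w)"
    using transfer[rule_format, OF compact_unit_simplex continuous_on_divergence_polynomial[OF poly_v]]
    unfolding K by simp
  have vec: "L2norm_vec K v = c * L2norm_vec unit_simplex (\<lambda>z. v (a + L z))"
    using transfer[rule_format, OF compact_unit_simplex, of "\<lambda>x. norm (v x)"]
      continuous_on_norm[OF continuous_on_polynomial_components[OF poly_v]]
    unfolding K by (simp add: L2norm_vec_eq_L2norm_norm)
  have "?\<rho> * L2norm K (divergence v) \<le> c * (sqrt ?d * ?C * (?\<rho> * L2norm_vec unit_simplex w))"
    using mult_left_mono[OF ref, of "c * ?\<rho>"] \<open>0 < c\<close> inball_diam_pos[OF L K]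
    by (simp add: div mult_ac)
  also have "\<dots> \<le> c * (sqrt ?d * ?C * (sqrt 2 * L2norm_vec unit_simplex (\<lambda>z. v (a + L z))))"
    using \<open>0 < c\<close> Cqd_nonneg by (intro mult_left_mono piola mult_nonneg_nonneg) auto
  also have "\<dots> = sqrt (2 * ?d) * ?C * L2norm_vec K v"
    by (simp add: vec real_sqrt_mult mult_ac)
  finally show ?thesis .
qed

theorem lemmaA5:
  fixes T :: "(real^'n::finite) set set" and K :: "(real^'n) set"
    and p :: nat and v :: "real^'n \<Rightarrow> real^'n"
  assumes "CARD('n) \<ge> 2"
    and "simplicial_mesh T" and "K \<in> T"
    and "v \<in> RTN p"
  shows "diameter K * L2norm K (divergence v)
         \<le> sqrt (2 * real CARD('n)) * shape_reg T * Cqd TYPE('n) (p + 1) * L2norm_vec K v"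
proof -
  have simplex: "int CARD('n) simplex K"
    using assms(2,3) by (simp add: simplicial_mesh_def)
  then obtain a and L :: "real^'n \<Rightarrow> real^'n"
    where L: "linear L" "inj L" and K: "K = (\<lambda>x. a + L x) ` unit_simplex"
    by (rule simplex_eq_affine_image_unit_simplex)
  have local: "inball_diam K * L2norm K (divergence v)
      \<le> sqrt (2 * real CARD('n)) * Cqd TYPE('n) (p + 1) * L2norm_vec K v"
    using L K RTN_component_poly_fun[OF assms(4)] by (rule inball_diam_mult_L2norm_divergence_le)
  have diam: "diameter K \<le> shape_reg T * inball_diam K"
    using assms(2,3) inball_diam_pos[OF L K] by (rule diameter_le_shape_reg_mult_inball_diam)
  then have "0 \<le> shape_reg T * inball_diam K"
    using diameter_ge_0[OF polytope_imp_bounded[OF simplex_imp_polytope[OF simplex]]] by linarith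
  then have "0 \<le> shape_reg T"
    using inball_diam_pos[OF L K] by (simp add: zero_le_mult_iff)
  have "diameter K * L2norm K (divergence v) \<le> shape_reg T * (inball_diam K * L2norm K (divergence v))"
    using mult_right_mono[OF diam L2norm_nonneg] by (simp add: mult.assoc)
  also have "\<dots> \<le> shape_reg T * (sqrt (2 * real CARD('n)) * Cqd TYPE('n) (p + 1) * L2norm_vec K v)"
    using local \<open>0 \<le> shape_reg T\<close> by (rule mult_left_mono)
  finally show ?thesis by (simp add: mult_ac)
qed

end
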